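(* Let $(X,d^\star)$ be a complete $\star$-metric space and let $A_1,A_2,\dots$ be a sequence of dense open subsets of $X$. Then $\bigcap_{n=1}^\infty A_n$ is dense in $X$.
   Context: A $t$-definer is a function $\star:[0,\infty)\times[0,\infty)\to[0,\infty)$ such that for all $a,b,c\ge 0$: $a\star b=b\star a$; $a\star(b\star c)=(a\star b)\star c$; if $a\le b$ then $a\star c\le b\star c$; $a\star 0=a$; and $\star$ is continuous in its first variable with respect to the Euclidean topology. Given a nonempty set $X$ and a $t$-definer $\star$, a $\star$-metric on $X$ is a function $d^\star:X\times X\to[0,\infty)$ such that for all $x,y,z\in X$: $d^\star(x,y)=0$ iff $x=y$; $d^\star(x,y)=d^\star(y,x)$; and $d^\star(x,y)\le d^\star(x,z)\star d^\star(z,y)$. Topological notions refer to the topology consisting of all $U\subseteq X$ such that for each $a\in U$ there is $r>0$ with $\{x: d^\star(a,x)<r\}\subseteq U$. A sequence $\{x_n\}$ is Cauchy if for every $\epsilon>0$ there is $k$ with $d^\star(x_n,x_m)<\epsilon$ for all $m,n\ge k$; it converges to $x$ if for every $\epsilon>0$ there is $k$ with $d^\star(x,x_n)<\epsilon$ for $n\ge k$. $(X,d^\star)$ is complete if every Cauchy sequence converges to a point of $X$. *)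

theory Defs
  imports "HOL-Analysis.Analysis"
begin

text \<open>A t-definer: a binary operation on [0,\<infinity>) (represented as a real function,
  constrained only on nonnegative arguments).\<close>
definition t_definer :: "(real \<Rightarrow> real \<Rightarrow> real) \<Rightarrow> bool" where
  "t_definer star \<longleftrightarrow>
     (\<forall>a\<ge>0. \<forall>b\<ge>0. star a b \<ge> 0) \<and>
     (\<forall>a\<ge>0. \<forall>b\<ge>0. star a b = star b a) \<and>
     (\<forall>a\<ge>0. \<forall>b\<ge>0. \<forall>c\<ge>0. star a (star b c) = star (star a b) c) \<and>
     (\<forall>a\<ge>0. \<forall>b\<ge>0. \<forall>c\<ge>0. a \<le> b \<longrightarrow> star a c \<le> star b c) \<and>
     (\<forall>a\<ge>0. star a 0 = a) \<and>
     (\<forall>b\<ge>0. continuous_on {0..} (\<lambda>a. star a b))"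

definition star_metric :: "(real \<Rightarrow> real \<Rightarrow> real) \<Rightarrow> 'a set \<Rightarrow> ('a \<Rightarrow> 'a \<Rightarrow> real) \<Rightarrow> bool" where
  "star_metric star X d \<longleftrightarrow>
     (\<forall>x\<in>X. \<forall>y\<in>X. d x y \<ge> 0) \<and>
     (\<forall>x\<in>X. \<forall>y\<in>X. d x y = 0 \<longleftrightarrow> x = y) \<and>
     (\<forall>x\<in>X. \<forall>y\<in>X. d x y = d y x) \<and>
     (\<forall>x\<in>X. \<forall>y\<in>X. \<forall>z\<in>X. d x y \<le> star (d x z) (d z y))"

definition star_topology :: "'a set \<Rightarrow> ('a \<Rightarrow> 'a \<Rightarrow> real) \<Rightarrow> 'a topology" where
  "star_topology X d = topology (\<lambda>U. U \<subseteq> X \<and>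
     (\<forall>a\<in>U. \<exists>r>0. {x\<in>X. d a x < r} \<subseteq> U))"

definition star_Cauchy :: "'a set \<Rightarrow> ('a \<Rightarrow> 'a \<Rightarrow> real) \<Rightarrow> (nat \<Rightarrow> 'a) \<Rightarrow> bool" where
  "star_Cauchy X d x \<longleftrightarrow> (\<forall>\<epsilon>>0. \<exists>k. \<forall>m n. m \<ge> k \<and> n \<ge> k \<longrightarrow> d (x n) (x m) < \<epsilon>)"

definition star_converges :: "('a \<Rightarrow> 'a \<Rightarrow> real) \<Rightarrow> (nat \<Rightarrow> 'a) \<Rightarrow> 'a \<Rightarrow> bool" where
  "star_converges d x l \<longleftrightarrow> (\<forall>\<epsilon>>0. \<exists>k. \<forall>n\<ge>k. d l (x n) < \<epsilon>)"

definition star_complete :: "'a set \<Rightarrow> ('a \<Rightarrow> 'a \<Rightarrow> real) \<Rightarrow> bool" where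
  "star_complete X d \<longleftrightarrow>
     (\<forall>x. range x \<subseteq> X \<and> star_Cauchy X d x \<longrightarrow> (\<exists>l\<in>X. star_converges d x l))"

end

(* Any two points within r of a common centre are within star r r of each other, and
   continuity of star at 0 together with a star 0 = a makes star r r arbitrarily small (and
   makes balls open). So the classical Baire argument goes through: inside a nonempty open U
   choose nested balls B(c n, rho n) whose closed hulls {y. d (c n) y <= star (rho n) (rho n)}
   lie in U and in A n, with star (rho n) (rho n) < 1/(n+1). The centres form a Cauchy
   sequence, and its limit lies in every closed hull, hence in U and in every A n. *)
theory Submission
  imports Defs
begin

definition star_ball :: "'a set \<Rightarrow> ('a \<Rightarrow> 'a \<Rightarrow> real) \<Rightarrow> 'a \<Rightarrow> real \<Rightarrow> 'a set" where
  "star_ball X d x r = {y\<in>X. d x y < r}"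

definition star_cball :: "'a set \<Rightarrow> ('a \<Rightarrow> 'a \<Rightarrow> real) \<Rightarrow> 'a \<Rightarrow> real \<Rightarrow> 'a set" where
  "star_cball X d x r = {y\<in>X. d x y \<le> r}"

lemma istopology_star_topology:
  fixes d :: "'a \<Rightarrow> 'a \<Rightarrow> real"
  shows "istopology (\<lambda>U. U \<subseteq> X \<and> (\<forall>a\<in>U. \<exists>r>0. {x\<in>X. d a x < r} \<subseteq> U))"
  unfolding istopology_def
proof (intro conjI allI impI ballI)
  fix S T a
  assume S: "S \<subseteq> X \<and> (\<forall>a\<in>S. \<exists>r>0. {x\<in>X. d a x < r} \<subseteq> S)"
    and T: "T \<subseteq> X \<and> (\<forall>a\<in>T. \<exists>r>0. {x\<in>X. d a x < r} \<subseteq> T)"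
  then show "S \<inter> T \<subseteq> X"
    by blast
  assume "a \<in> S \<inter> T"
  then obtain r s where "r > 0" "{x\<in>X. d a x < r} \<subseteq> S" "s > 0" "{x\<in>X. d a x < s} \<subseteq> T"
    using S T by blast
  then show "\<exists>r>0. {x\<in>X. d a x < r} \<subseteq> S \<inter> T"
    by (intro exI[of _ "min r s"]) auto
next
  fix K a
  assume K: "\<forall>S\<in>K. S \<subseteq> X \<and> (\<forall>a\<in>S. \<exists>r>0. {x\<in>X. d a x < r} \<subseteq> S)"
  then show "\<Union>K \<subseteq> X"
    by blast
  assume "a \<in> \<Union>K"
  with K show "\<exists>r>0. {x\<in>X. d a x < r} \<subseteq> \<Union>K"
    by (meson Union_iff subset_iff)
qed

lemma openin_star_topology:
  "openin (star_topology X d) U \<longleftrightarrow> U \<subseteq> X \<and> (\<forall>a\<in>U. \<exists>r>0. star_ball X d a r \<subseteq> U)"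
  unfolding star_topology_def star_ball_def by (simp add: topology_inverse'[OF istopology_star_topology])

lemma topspace_star_topology: "topspace (star_topology X d) = X"
proof (rule subset_antisym)
  show "topspace (star_topology X d) \<subseteq> X"
    using openin_topspace[of "star_topology X d"] unfolding openin_star_topology by blast
  have "openin (star_topology X d) X"
    unfolding openin_star_topology star_ball_def by (auto intro: exI[of _ 1])
  then show "X \<subseteq> topspace (star_topology X d)"
    by (rule openin_subset)
qed

context
  fixes star :: "real \<Rightarrow> real \<Rightarrow> real"
  assumes star: "t_definer star"
begin

lemma t_definer_commute: "0 \<le> a \<Longrightarrow> 0 \<le> b \<Longrightarrow> star a b = star b a"
  using star unfolding t_definer_def by fast

lemma t_definer_mono_left: "0 \<le> a \<Longrightarrow> a \<le> b \<Longrightarrow> 0 \<le> c \<Longrightarrow> star a c \<le> star b c"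
  using star unfolding t_definer_def by (metis order_trans)

lemma t_definer_zero_right: "0 \<le> a \<Longrightarrow> star a 0 = a"
  using star unfolding t_definer_def by fast

lemma t_definer_continuous_on: "0 \<le> b \<Longrightarrow> continuous_on {0..} (\<lambda>a. star a b)"
  using star unfolding t_definer_def by fast

lemma t_definer_mono:
  assumes "0 \<le> a" "a \<le> a'" "0 \<le> b" "b \<le> b'"
  shows "star a b \<le> star a' b'"
proof -
  have "star a b \<le> star a' b"
    using assms by (simp add: t_definer_mono_left)
  also have "\<dots> = star b a'"
    using assms by (simp add: t_definer_commute)
  also have "\<dots> \<le> star b' a'"
    using assms by (simp add: t_definer_mono_left)
  also have "\<dots> = star a' b'"
    using assms by (simp add: t_definer_commute)
  finally show ?thesis .
qed

lemma t_definer_ge_left: "0 \<le> a \<Longrightarrow> 0 \<le> b \<Longrightarrow> a \<le> star a b"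
  using t_definer_mono[of a a 0 b] by (simp add: t_definer_zero_right)

lemma t_definer_less_near_zero:
  assumes "0 \<le> a" "a < r"
  obtains s where "s > 0" "\<And>t. 0 \<le> t \<Longrightarrow> t < s \<Longrightarrow> star a t < r"
proof -
  have "((\<lambda>t. star t a) \<longlongrightarrow> star 0 a) (at 0 within {0..})"
    using t_definer_continuous_on[OF assms(1)] by (simp add: continuous_on_def)
  moreover have star_0: "star 0 a = a"
    using t_definer_commute[of 0 a] t_definer_zero_right[of a] assms(1) by simp
  ultimately have "\<forall>\<^sub>F t in at 0 within {0..}. star t a < r"
    using assms(2) by (simp add: order_tendstoD(2))
  then obtain s where "s > 0" and s: "\<And>t. t \<in> {0..} \<Longrightarrow> t \<noteq> 0 \<Longrightarrow> dist t 0 < s \<Longrightarrow> star t a < r"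
    unfolding eventually_at by blast
  show thesis
  proof (rule that[OF \<open>s > 0\<close>])
    fix t :: real
    assume "0 \<le> t" "t < s"
    then have "star t a < r"
      using s[of t] star_0 assms(2) by (cases "t = 0") auto
    then show "star a t < r"
      using assms \<open>0 \<le> t\<close> by (simp add: t_definer_commute)
  qed
qed

lemma t_definer_exists_small:
  assumes "e > 0"
  obtains r where "r > 0" "star r r < e"
proof -
  obtain s where "s > 0" and s: "\<And>t. 0 \<le> t \<Longrightarrow> t < s \<Longrightarrow> star (e/2) t < e"
    using t_definer_less_near_zero[of "e/2" e] assms by auto
  define r where "r = min (e/2) (s/2)"
  have "r > 0"
    using \<open>s > 0\<close> assms by (simp add: r_def)
  have "star r r \<le> star (e/2) r"
    using \<open>r > 0\<close> by (intro t_definer_mono_left) (auto simp: r_def)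
  also have "\<dots> < e"
    using s \<open>r > 0\<close> \<open>s > 0\<close> by (simp add: r_def)
  finally show thesis
    using that \<open>r > 0\<close> by blast
qed

end

context
  fixes star :: "real \<Rightarrow> real \<Rightarrow> real" and X :: "'a set" and d :: "'a \<Rightarrow> 'a \<Rightarrow> real"
  assumes d: "star_metric star X d"
begin

lemma star_metric_nonneg: "x \<in> X \<Longrightarrow> y \<in> X \<Longrightarrow> 0 \<le> d x y"
  using d unfolding star_metric_def by fast

lemma star_metric_self: "x \<in> X \<Longrightarrow> d x x = 0"
  using d unfolding star_metric_def by fast

lemma star_metric_sym: "x \<in> X \<Longrightarrow> y \<in> X \<Longrightarrow> d x y = d y x"
  using d unfolding star_metric_def by fast

lemma star_metric_triangle: "x \<in> X \<Longrightarrow> y \<in> X \<Longrightarrow> z \<in> X \<Longrightarrow> d x y \<le> star (d x z) (d z y)"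
  using d unfolding star_metric_def by fast

lemma centre_in_star_ball: "x \<in> X \<Longrightarrow> 0 < r \<Longrightarrow> x \<in> star_ball X d x r"
  by (simp add: star_ball_def star_metric_self)

lemma nested_star_balls_centre_dist:
  assumes x: "\<And>n. x n \<in> X" and r: "\<And>n. r n > 0"
    and nested: "\<And>n. star_ball X d (x (Suc n)) (r (Suc n)) \<subseteq> star_ball X d (x n) (r n)"
    and "n \<le> m"
  shows "d (x n) (x m) < r n"
proof -
  have "star_ball X d (x m) (r m) \<subseteq> star_ball X d (x n) (r n)"
    using lift_Suc_antimono_le[of "\<lambda>n. star_ball X d (x n) (r n)"] nested \<open>n \<le> m\<close> by blast
  then show ?thesis
    using centre_in_star_ball[OF x r, of m] by (auto simp: star_ball_def)
qed

end

context
  fixes star :: "real \<Rightarrow> real \<Rightarrow> real" and X :: "'a set" and d :: "'a \<Rightarrow> 'a \<Rightarrow> real"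
  assumes star: "t_definer star" and d: "star_metric star X d"
begin

lemma star_metric_triangle_le:
  assumes "x \<in> X" "y \<in> X" "z \<in> X" "d x z \<le> a" "d z y \<le> b"
  shows "d x y \<le> star a b"
  using star_metric_triangle[OF d, of x y z] t_definer_mono[OF star, of "d x z" a "d z y" b]
    star_metric_nonneg[OF d] assms by fastforce

lemma star_ball_subset_star_cball: "0 \<le> r \<Longrightarrow> star_ball X d x r \<subseteq> star_cball X d x (star r r)"
  using t_definer_ge_left[OF star, of r r] by (auto simp: star_ball_def star_cball_def)

lemma openin_star_ball:
  assumes "x \<in> X"
  shows "openin (star_topology X d) (star_ball X d x r)"
  unfolding openin_star_topology
proof (intro conjI ballI)
  show "star_ball X d x r \<subseteq> X"
    by (auto simp: star_ball_def)
next
  fix y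
  assume y: "y \<in> star_ball X d x r"
  then have "y \<in> X" "0 \<le> d x y" "d x y < r"
    using assms star_metric_nonneg[OF d] by (auto simp: star_ball_def)
  then obtain s where "s > 0" and s: "\<And>t. 0 \<le> t \<Longrightarrow> t < s \<Longrightarrow> star (d x y) t < r"
    using t_definer_less_near_zero[OF star] by metis
  have "d x z < r" if "z \<in> star_ball X d y s" for z
  proof -
    have "z \<in> X" "d y z < s"
      using that by (auto simp: star_ball_def)
    then have "d x z \<le> star (d x y) (d y z)"
      using star_metric_triangle[OF d] assms \<open>y \<in> X\<close> by blast
    also have "\<dots> < r"
      using s star_metric_nonneg[OF d] \<open>y \<in> X\<close> \<open>z \<in> X\<close> \<open>d y z < s\<close> by blast
    finally show ?thesis .
  qed
  then show "\<exists>s>0. star_ball X d y s \<subseteq> star_ball X d x r"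
    using \<open>s > 0\<close> by (auto simp: star_ball_def)
qed

lemma dense_openin_contains_small_star_cball:
  assumes "openin (star_topology X d) A" "star_topology X d closure_of A = X"
    and "openin (star_topology X d) V" "V \<noteq> {}" "e > 0"
  obtains x r where "x \<in> X" "r > 0" "star r r < e" "star_cball X d x (star r r) \<subseteq> V \<inter> A"
proof -
  have "A \<inter> V \<noteq> {}"
    using assms(2-4) dense_intersects_open[of "star_topology X d" A] topspace_star_topology by metis
  then obtain x where x: "x \<in> V \<inter> A"
    by blast
  have "openin (star_topology X d) (V \<inter> A)"
    using assms(1,3) by blast
  then obtain \<epsilon> where "\<epsilon> > 0" "star_ball X d x \<epsilon> \<subseteq> V \<inter> A" "x \<in> X"
    using x unfolding openin_star_topology by blast
  moreover obtain r where "r > 0" "star r r < min e \<epsilon>"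
    using t_definer_exists_small[OF star, of "min e \<epsilon>"] \<open>\<epsilon> > 0\<close> assms(5) by auto
  moreover have "star_cball X d x (star r r) \<subseteq> star_ball X d x \<epsilon>"
    using \<open>star r r < min e \<epsilon>\<close> by (auto simp: star_ball_def star_cball_def)
  ultimately show thesis
    using that by (meson min.strict_boundedE order_trans)
qed

lemma star_complete_nested_balls:
  assumes complete: "star_complete X d"
    and x: "\<And>n. x n \<in> X" and r: "\<And>n. r n > 0"
    and small: "\<And>e. e > 0 \<Longrightarrow> \<exists>k. star (r k) (r k) < e"
    and nested: "\<And>n. star_ball X d (x (Suc n)) (r (Suc n)) \<subseteq> star_ball X d (x n) (r n)"
  obtains l where "l \<in> X" "\<And>n. d (x n) l \<le> star (r n) (r n)"
proof -
  have near: "d (x n) (x m) < r n" if "n \<le> m" for n m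
    using nested_star_balls_centre_dist[OF d, of x r, OF x r nested that] .
  have "star_Cauchy X d x"
    unfolding star_Cauchy_def
  proof (intro allI impI)
    fix e :: real
    assume "e > 0"
    then obtain k where k: "star (r k) (r k) < e"
      using small by blast
    have "d (x n) (x m) < e" if "k \<le> m" "k \<le> n" for m n
    proof -
      have "d (x n) (x m) \<le> star (r k) (r k)"
        using star_metric_triangle_le[OF x x x] near[of k n] near[of k m] star_metric_sym[OF d x x] that
        by (metis less_imp_le)
      with k show ?thesis
        by linarith
    qed
    then show "\<exists>k. \<forall>m n. k \<le> m \<and> k \<le> n \<longrightarrow> d (x n) (x m) < e"
      by blast
  qed
  then obtain l where "l \<in> X" and l: "star_converges d x l"
    using complete x unfolding star_complete_def by blast
  have "d (x n) l \<le> star (r n) (r n)" for n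
  proof -
    obtain k where k: "\<And>m. m \<ge> k \<Longrightarrow> d l (x m) < r n"
      using l r[of n] unfolding star_converges_def by blast
    define m where "m = max n k"
    have "d (x n) (x m) \<le> r n" "d (x m) l \<le> r n"
      using near[of n m] k[of m] star_metric_sym[OF d x \<open>l \<in> X\<close>, of m] by (simp_all add: m_def)
    then show ?thesis
      using star_metric_triangle_le[OF x \<open>l \<in> X\<close> x] by blast
  qed
  with \<open>l \<in> X\<close> show thesis
    by (rule that)
qed

lemma dense_openin_refines_star_ball:
  assumes "openin (star_topology X d) A" "star_topology X d closure_of A = X"
    and "c \<in> X" "\<rho> > 0" "e > 0"
  obtains c' \<rho>' where "c' \<in> X" "\<rho>' > 0" "star \<rho>' \<rho>' < e"
    "star_cball X d c' (star \<rho>' \<rho>') \<subseteq> star_cball X d c (star \<rho> \<rho>) \<inter> A"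
    "star_ball X d c' \<rho>' \<subseteq> star_ball X d c \<rho>"
proof -
  have "star_ball X d c \<rho> \<noteq> {}"
    using centre_in_star_ball[OF d assms(3,4)] by blast
  then obtain c' \<rho>' where "c' \<in> X" "\<rho>' > 0" "star \<rho>' \<rho>' < e"
    and c': "star_cball X d c' (star \<rho>' \<rho>') \<subseteq> star_ball X d c \<rho> \<inter> A"
    using dense_openin_contains_small_star_cball[OF assms(1,2) openin_star_ball[OF assms(3)] _ assms(5)]
    by blast
  moreover have "star_cball X d c' (star \<rho>' \<rho>') \<subseteq> star_cball X d c (star \<rho> \<rho>) \<inter> A"
    using c' star_ball_subset_star_cball[of \<rho> c] \<open>\<rho> > 0\<close> by auto
  moreover have "star_ball X d c' \<rho>' \<subseteq> star_ball X d c \<rho>"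
    using c' star_ball_subset_star_cball[of \<rho>' c'] \<open>\<rho>' > 0\<close> by auto
  ultimately show thesis
    using that by blast
qed

lemma dense_openin_nested_star_balls:
  fixes A :: "nat \<Rightarrow> 'a set"
  assumes A_open: "\<And>n. openin (star_topology X d) (A n)"
    and A_dense: "\<And>n. star_topology X d closure_of A n = X"
    and U: "openin (star_topology X d) U" "U \<noteq> {}"
  obtains c \<rho> where "\<And>n. c n \<in> X" "\<And>n. \<rho> n > 0" "\<And>n. star (\<rho> n) (\<rho> n) < 1 / real (Suc n)"
    "\<And>n. star_cball X d (c n) (star (\<rho> n) (\<rho> n)) \<subseteq> U \<inter> A n"
    "\<And>n. star_ball X d (c (Suc n)) (\<rho> (Suc n)) \<subseteq> star_ball X d (c n) (\<rho> n)"
proof -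
  define good where "good n = (\<lambda>(c, \<rho>). c \<in> X \<and> \<rho> > 0 \<and> star \<rho> \<rho> < 1 / real (Suc n) \<and>
      star_cball X d c (star \<rho> \<rho>) \<subseteq> U \<inter> A n)" for n
  have "\<exists>p. good 0 p"
  proof -
    obtain c \<rho> where "c \<in> X" "\<rho> > 0" "star \<rho> \<rho> < 1" "star_cball X d c (star \<rho> \<rho>) \<subseteq> U \<inter> A 0"
      using dense_openin_contains_small_star_cball[OF A_open A_dense U, of 1] by auto
    then have "good 0 (c, \<rho>)"
      by (simp add: good_def)
    then show ?thesis ..
  qed
  moreover have "\<exists>q. good (Suc n) q \<and> star_ball X d (fst q) (snd q) \<subseteq> star_ball X d (fst p) (snd p)"
    if "good n p" for n p
  proof -
    obtain c \<rho> where p: "p = (c, \<rho>)" "c \<in> X" "\<rho> > 0" "star_cball X d c (star \<rho> \<rho>) \<subseteq> U"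
      using \<open>good n p\<close> by (auto simp: good_def split: prod.splits)
    obtain c' \<rho>' where "c' \<in> X" "\<rho>' > 0" "star \<rho>' \<rho>' < 1 / real (Suc (Suc n))"
      and "star_cball X d c' (star \<rho>' \<rho>') \<subseteq> star_cball X d c (star \<rho> \<rho>) \<inter> A (Suc n)"
      and "star_ball X d c' \<rho>' \<subseteq> star_ball X d c \<rho>"
      using dense_openin_refines_star_ball[OF A_open A_dense \<open>c \<in> X\<close> \<open>\<rho> > 0\<close>,
          of "1 / real (Suc (Suc n))"] by auto
    with p have "good (Suc n) (c', \<rho>') \<and> star_ball X d c' \<rho>' \<subseteq> star_ball X d c \<rho>"
      by (auto simp: good_def)
    then show ?thesis
      using p by auto
  qed
  ultimately have "\<exists>f. \<forall>n. good n (f n) \<and>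
      star_ball X d (fst (f (Suc n))) (snd (f (Suc n))) \<subseteq> star_ball X d (fst (f n)) (snd (f n))"
    by (rule dependent_nat_choice[where Q = "\<lambda>n p q. star_ball X d (fst q) (snd q) \<subseteq> star_ball X d (fst p) (snd p)"])
  then obtain f where f: "\<And>n. good n (f n)"
    and f_nested: "\<And>n. star_ball X d (fst (f (Suc n))) (snd (f (Suc n))) \<subseteq> star_ball X d (fst (f n)) (snd (f n))"
    by blast
  have "fst (f n) \<in> X" "snd (f n) > 0" "star (snd (f n)) (snd (f n)) < 1 / real (Suc n)"
    "star_cball X d (fst (f n)) (star (snd (f n)) (snd (f n))) \<subseteq> U \<inter> A n" for n
    using f[of n] by (simp_all add: good_def case_prod_beta)
  then show thesis
    using f_nested by (rule that)
qed

lemma star_complete_Inter_dense_openin_meets: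
  fixes A :: "nat \<Rightarrow> 'a set"
  assumes complete: "star_complete X d"
    and A_open: "\<And>n. openin (star_topology X d) (A n)"
    and A_dense: "\<And>n. star_topology X d closure_of A n = X"
    and U: "openin (star_topology X d) U" "U \<noteq> {}"
  shows "(\<Inter>n. A n) \<inter> U \<noteq> {}"
proof -
  obtain c \<rho> where c: "\<And>n. c n \<in> X" and \<rho>: "\<And>n. \<rho> n > 0"
    and \<rho>_small: "\<And>n. star (\<rho> n) (\<rho> n) < 1 / real (Suc n)"
    and cball: "\<And>n. star_cball X d (c n) (star (\<rho> n) (\<rho> n)) \<subseteq> U \<inter> A n"
    and nested: "\<And>n. star_ball X d (c (Suc n)) (\<rho> (Suc n)) \<subseteq> star_ball X d (c n) (\<rho> n)"
    using dense_openin_nested_star_balls[of A U, OF A_open A_dense U] by blast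
  have small: "\<exists>k. star (\<rho> k) (\<rho> k) < e" if "e > 0" for e
  proof -
    obtain k where "1 / real (Suc k) < e"
      using \<open>e > 0\<close> nat_approx_posE by blast
    then show ?thesis
      using \<rho>_small[of k] by (meson order_less_trans)
  qed
  obtain l where "l \<in> X" "\<And>n. d (c n) l \<le> star (\<rho> n) (\<rho> n)"
    using star_complete_nested_balls[of c \<rho>, OF complete c \<rho> small nested] by blast
  then have "l \<in> U \<inter> A n" for n
    using cball[of n] by (auto simp: star_cball_def)
  then show ?thesis
    by blast
qed

end

theorem theorem4p14:
  fixes star :: "real \<Rightarrow> real \<Rightarrow> real" and X :: "'a set"
    and d :: "'a \<Rightarrow> 'a \<Rightarrow> real" and A :: "nat \<Rightarrow> 'a set"
  assumes "X \<noteq> {}"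
    and "t_definer star"
    and "star_metric star X d"
    and "star_complete X d"
    and "\<And>n. openin (star_topology X d) (A n)"
    and "\<And>n. (star_topology X d) closure_of (A n) = X"
  shows "(star_topology X d) closure_of (\<Inter>n. A n) = X"
  using star_complete_Inter_dense_openin_meets[OF assms(2-6)]
    dense_intersects_open[of "star_topology X d" "\<Inter>n. A n"]
  by (simp add: topspace_star_topology)

end
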